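(* Let $(\Theta,D)$ be a matrix scheme. If the projection of preference of consequences in $(\Theta,D)$ is unique, then it coincides with domination on $D$.
   Context: A preference relation on a set $X$ is a binary relation $\prec$ on $X$ that is asymmetric ($x\prec y \Rightarrow$ not $y\prec x$) and negatively transitive (not $x\prec y$ and not $y\prec z$ $\Rightarrow$ not $x\prec z$). A matrix scheme is a pair $(\Theta,D)$ where $\Theta$ is an arbitrary nonempty set and $D$ is a set of real-valued functions on $\Theta$. Domination on $D$ is the relation $\prec$ defined by: $d_1\prec d_2$ iff $d_1(\theta)\le d_2(\theta)$ for all $\theta\in\Theta$ and $d_1(\theta^* )<d_2(\theta^* )$ for some $\theta^*\in\Theta$. A projection of preference of consequences in $(\Theta,D)$ is a preference relation $\prec^P$ on $D$ such that $d_1\prec d_2\Rightarrow d_1\prec^P d_2$ for all $d_1,d_2\in D$, where $\prec$ is domination. *)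

theory Defs
  imports Complex_Main
begin

(* The parameter set Theta is the (nonempty) type 'a; D is a set of real-valued
   functions on Theta. Relations on D are sets of pairs contained in D \<times> D. *)

definition preference_relation :: "'b set \<Rightarrow> ('b \<times> 'b) set \<Rightarrow> bool" where
  "preference_relation X R \<longleftrightarrow> R \<subseteq> X \<times> X
     \<and> (\<forall>x\<in>X. \<forall>y\<in>X. (x, y) \<in> R \<longrightarrow> (y, x) \<notin> R)
     \<and> (\<forall>x\<in>X. \<forall>y\<in>X. \<forall>z\<in>X. (x, y) \<notin> R \<and> (y, z) \<notin> R \<longrightarrow> (x, z) \<notin> R)"

definition dominates :: "('a \<Rightarrow> real) \<Rightarrow> ('a \<Rightarrow> real) \<Rightarrow> bool" where
  "dominates d1 d2 \<longleftrightarrow> (\<forall>\<theta>. d1 \<theta> \<le> d2 \<theta>) \<and> (\<exists>\<theta>. d1 \<theta> < d2 \<theta>)"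

definition domination :: "('a \<Rightarrow> real) set \<Rightarrow> (('a \<Rightarrow> real) \<times> ('a \<Rightarrow> real)) set" where
  "domination D = {(d1, d2). d1 \<in> D \<and> d2 \<in> D \<and> dominates d1 d2}"

definition projection_of_preference ::
  "('a \<Rightarrow> real) set \<Rightarrow> (('a \<Rightarrow> real) \<times> ('a \<Rightarrow> real)) set \<Rightarrow> bool" where
  "projection_of_preference D P \<longleftrightarrow> preference_relation D P
     \<and> (\<forall>d1\<in>D. \<forall>d2\<in>D. dominates d1 d2 \<longrightarrow> (d1, d2) \<in> P)"

end

theory Submission
  imports Defs
begin

(* Every projection P of preference contains domination, so it
   suffices to show that a unique projection P relates only dominating pairs.
   For a fixed parameter t, refine P lexicographically: first compare the
   values at t, and only on ties fall back to P.  This refinement is again a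
   preference relation and still extends domination, i.e. it is again a
   projection; by uniqueness it equals P.  Hence (a, b) \<in> P forces
   a t \<le> b t for every t.  Since preference relations are irreflexive, a \<noteq> b,
   so some coordinate is strict and a dominates b. *)

lemma preference_relation_irrefl:
  assumes "preference_relation X R" and "x \<in> X"
  shows "(x, x) \<notin> R"
  using assms unfolding preference_relation_def by blast

definition lex_refine :: "'b set \<Rightarrow> ('b \<Rightarrow> real) \<Rightarrow> ('b \<times> 'b) set \<Rightarrow> ('b \<times> 'b) set" where
  "lex_refine X f R = {(x, y). x \<in> X \<and> y \<in> X \<and> (f x < f y \<or> (f x = f y \<and> (x, y) \<in> R))}"

lemma lex_refine_iff:
  "(x, y) \<in> lex_refine X f R \<longleftrightarrow> x \<in> X \<and> y \<in> X \<and> (f x < f y \<or> (f x = f y \<and> (x, y) \<in> R))"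
  unfolding lex_refine_def by simp

text \<open>Refining a preference relation lexicographically by a key yields a
  preference relation; negative transitivity follows by splitting on whether
  the keys of the three elements all agree.\<close>
lemma preference_relation_lex_refine:
  assumes pref: "preference_relation X R"
  shows "preference_relation X (lex_refine X f R)"
proof -
  have asym: "\<And>x y. x \<in> X \<Longrightarrow> y \<in> X \<Longrightarrow> (x, y) \<in> R \<Longrightarrow> (y, x) \<notin> R"
    and neg_trans: "\<And>x y z. x \<in> X \<Longrightarrow> y \<in> X \<Longrightarrow> z \<in> X \<Longrightarrow>
        (x, y) \<notin> R \<Longrightarrow> (y, z) \<notin> R \<Longrightarrow> (x, z) \<notin> R"
    using pref unfolding preference_relation_def by blast+
  have refine_neg_trans: "(x, z) \<notin> lex_refine X f R"
    if X: "x \<in> X" "y \<in> X" "z \<in> X"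
      and xy: "(x, y) \<notin> lex_refine X f R" and yz: "(y, z) \<notin> lex_refine X f R" for x y z
  proof
    assume xz: "(x, z) \<in> lex_refine X f R"
    have "f y \<le> f x" "f z \<le> f y" using X xy yz by (auto simp: lex_refine_iff)
    with xz X have ties: "f x = f y" "f y = f z" and "(x, z) \<in> R"
      by (auto simp: lex_refine_iff)
    moreover have "(x, y) \<notin> R" "(y, z) \<notin> R" using X xy yz ties by (auto simp: lex_refine_iff)
    ultimately show False using neg_trans X by blast
  qed
  moreover have "(y, x) \<notin> lex_refine X f R"
    if "x \<in> X" "y \<in> X" "(x, y) \<in> lex_refine X f R" for x y
    using that asym[of x y] by (auto simp: lex_refine_iff)
  moreover have "lex_refine X f R \<subseteq> X \<times> X" by (auto simp: lex_refine_def)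
  ultimately show ?thesis
    unfolding preference_relation_def by blast
qed

lemma domination_subset_projection:
  assumes "projection_of_preference D P"
  shows "domination D \<subseteq> P"
  using assms unfolding projection_of_preference_def domination_def by blast

text \<open>Refining a projection by the value at any parameter t is again a
  projection, because domination never decreases the value at t.\<close>
lemma projection_lex_refine:
  assumes "projection_of_preference D P"
  shows "projection_of_preference D (lex_refine D (\<lambda>d. d t) P)"
proof -
  have "(d1, d2) \<in> lex_refine D (\<lambda>d. d t) P"
    if "d1 \<in> D" "d2 \<in> D" "dominates d1 d2" for d1 d2
  proof -
    have "(d1, d2) \<in> P" using assms that unfolding projection_of_preference_def by blast
    moreover have "d1 t \<le> d2 t" using that(3) unfolding dominates_def by blast
    ultimately show ?thesis using that(1,2) by (auto simp: lex_refine_iff)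
  qed
  with assms show ?thesis
    unfolding projection_of_preference_def
    by (simp add: preference_relation_lex_refine)
qed

lemma dominates_if_le_and_distinct:
  assumes le: "\<And>t. a t \<le> b t" and ne: "a \<noteq> b"
  shows "dominates a b"
proof -
  obtain t where "a t \<noteq> b t" using ne by blast
  with le have "a t < b t" by (simp add: order_le_neq_trans)
  with le show ?thesis unfolding dominates_def by blast
qed

theorem theorem1:
  fixes D :: "('a \<Rightarrow> real) set"
  assumes "\<exists>!P. projection_of_preference D P"
    and "projection_of_preference D P"
  shows "P = domination D"
proof
  show "domination D \<subseteq> P" using assms(2) by (rule domination_subset_projection)
next
  obtain Q where unique: "\<And>R. projection_of_preference D R \<Longrightarrow> R = Q"
    using assms(1) by auto
  have refine_eq: "lex_refine D (\<lambda>d. d t) P = P" for t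
    using unique[OF projection_lex_refine[OF assms(2)]] unique[OF assms(2)] by simp
  have pref: "preference_relation D P" and PD: "P \<subseteq> D \<times> D"
    using assms(2) unfolding projection_of_preference_def preference_relation_def by blast+
  show "P \<subseteq> domination D"
  proof (clarify)
    fix a b assume ab: "(a, b) \<in> P"
    then have D: "a \<in> D" "b \<in> D" using PD by auto
    have "a t \<le> b t" for t
    proof -
      have "(a, b) \<in> lex_refine D (\<lambda>d. d t) P" using ab by (simp only: refine_eq)
      then show ?thesis unfolding lex_refine_iff by auto
    qed
    moreover have "a \<noteq> b" using ab preference_relation_irrefl[OF pref] D by auto
    ultimately show "(a, b) \<in> domination D"
      using D dominates_if_le_and_distinct unfolding domination_def by blast
  qed
qed

end
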